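(* Let $\Lambda=\{\Lambda_j\}_{j=1}^\infty$ and $\Omega=\{\Omega_j\}_{j=1}^\infty$ be $(C,C')$-controlled $K$-$g$-frames for $\mathcal H$ with respect to $\{\mathcal H_j\}_{j=1}^\infty$ and $\{\mathcal W_j\}_{j=1}^\infty$, respectively. For each $j\in\mathbb N$ let $\{f_{jk}\}_{k\in I_j}$ ($I_j\subseteq\mathbb N$) be a frame for $\mathcal H_j$ with frame bounds $\alpha,\beta$ and $\{g_{jk}\}_{k\in Q_j}$ ($Q_j\subseteq\mathbb N$) a frame for $\mathcal W_j$ with frame bounds $\alpha',\beta'$ (the bounds independent of $j$). Then the following are equivalent: (i) $\Lambda$ and $\Omega$ are $(C,C')$-controlled $K$-$g$-woven; (ii) $\{(CC')^{1/2}\Lambda_j^*f_{jk}\}_{j\in\mathbb N,k\in I_j}$ and $\{(CC')^{1/2}\Omega_j^*g_{jk}\}_{j\in\mathbb N,k\in Q_j}$ are woven $K$-frames for $\mathcal H$, i.e. there are universal constants $0<D_1\le D_2<\infty$ such that for every $\sigma\subseteq\mathbb N$ and all $f\in\mathcal H$, $$D_1\|K^*f\|^2\le\sum_{j\in\sigma}\sum_{k\in I_j}|\langle f,(CC')^{1/2}\Lambda_j^*f_{jk}\rangle|^2+\sum_{j\in\sigma^c}\sum_{k\in Q_j}|\langle f,(CC')^{1/2}\Omega_j^*g_{jk}\rangle|^2\le D_2\|f\|^2.$$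
   Context: $\mathcal H$ is a complex separable Hilbert space, $K\in\mathcal L(\mathcal H)$, $C,C'\in\mathcal{GL}^+(\mathcal H)$ (bounded positive operators with bounded inverse); $\{\mathcal H_j\}$, $\{\mathcal W_j\}$ are sequences of closed subspaces of Hilbert spaces $\mathcal K_1,\mathcal K_2$; $\Lambda_j\in\mathcal L(\mathcal H,\mathcal H_j)$, $\Omega_j\in\mathcal L(\mathcal H,\mathcal W_j)$. Standing assumption: $C$ and $C'$ commute with each other and with every $\Lambda_j^*\Lambda_j$ and $\Omega_j^*\Omega_j$, so $(CC')^{1/2}$ exists and $\langle\Lambda_jCf,\Lambda_jC'f\rangle=\|\Lambda_j(CC')^{1/2}f\|^2$ (similarly for $\Omega_j$). A family $\{\Gamma_j\}$ is a $(C,C')$-controlled $K$-$g$-frame if there are $0<A\le B$ with $A\|K^*f\|^2\le\sum_j\langle\Gamma_jCf,\Gamma_jC'f\rangle\le B\|f\|^2$ for all $f$. $\Lambda,\Omega$ are $(C,C')$-controlled $K$-$g$-woven if there are universal $0<A\le B$ such that for every $\sigma\subseteq\mathbb N$ the family $\{\Lambda_j\}_{j\in\sigma}\cup\{\Omega_j\}_{j\in\sigma^c}$ is a $(C,C')$-controlled $K$-$g$-frame with bounds $A,B$. A sequence $\{h_k\}$ in a Hilbert space $V$ is a frame with bounds $a,b>0$ if $a\|v\|^2\le\sum_k|\langle v,h_k\rangle|^2\le b\|v\|^2$ for all $v\in V$. *)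

theory Defs
  imports "HOL-Analysis.Analysis"
begin

class scaleC = scaleR +
  fixes scaleC :: "complex \<Rightarrow> 'a \<Rightarrow> 'a"
  assumes scaleR_scaleC: "scaleR r = scaleC (complex_of_real r)"

class complex_vector = real_vector + scaleC +
  assumes scaleC_add_right: "scaleC a (x + y) = scaleC a x + scaleC a y"
    and scaleC_add_left: "scaleC (a + b) x = scaleC a x + scaleC b x"
    and scaleC_scaleC: "scaleC a (scaleC b x) = scaleC (a * b) x"
    and scaleC_one: "scaleC 1 x = x"

class complex_normed_vector = complex_vector + real_normed_vector +
  assumes norm_scaleC: "norm (scaleC a x) = cmod a * norm x"

text \<open>Inner product, linear in the first argument, conjugate-linear in the second.\<close>
class complex_inner = complex_normed_vector +
  fixes cinner :: "'a \<Rightarrow> 'a \<Rightarrow> complex"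
  assumes cinner_commute: "cinner x y = cnj (cinner y x)"
    and cinner_add_left: "cinner (x + y) z = cinner x z + cinner y z"
    and cinner_scaleC_left: "cinner (scaleC r x) y = r * cinner x y"
    and cinner_self_real: "cinner x x = complex_of_real (Re (cinner x x))"
    and cinner_self_nonneg: "0 \<le> Re (cinner x x)"
    and cinner_self_eq_zero: "cinner x x = 0 \<longleftrightarrow> x = 0"
    and norm_eq_sqrt_cinner: "norm x = sqrt (Re (cinner x x))"

class chilbert_space = complex_inner + complete_space

definition clinear :: "('a::complex_vector \<Rightarrow> 'b::complex_vector) \<Rightarrow> bool" where
  "clinear T \<longleftrightarrow> (\<forall>x y. T (x + y) = T x + T y) \<and> (\<forall>c x. T (scaleC c x) = scaleC c (T x))"

definition bounded_clinear :: "('a::complex_normed_vector \<Rightarrow> 'b::complex_normed_vector) \<Rightarrow> bool" where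
  "bounded_clinear T \<longleftrightarrow> clinear T \<and> (\<exists>M. \<forall>x. norm (T x) \<le> M * norm x)"

definition adj :: "('a::chilbert_space \<Rightarrow> 'b::chilbert_space) \<Rightarrow> ('b \<Rightarrow> 'a)" where
  "adj T = (SOME S. \<forall>x y. cinner (T x) y = cinner x (S y))"

definition positive_op :: "('a::chilbert_space \<Rightarrow> 'a) \<Rightarrow> bool" where
  "positive_op T \<longleftrightarrow> bounded_clinear T \<and>
     (\<forall>x. cinner (T x) x = complex_of_real (Re (cinner (T x) x)) \<and> 0 \<le> Re (cinner (T x) x))"

definition GL_plus :: "('a::chilbert_space \<Rightarrow> 'a) \<Rightarrow> bool" where
  "GL_plus T \<longleftrightarrow> positive_op T \<and>
     (\<exists>S. bounded_clinear S \<and> S \<circ> T = id \<and> T \<circ> S = id)"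

definition closed_csubspace :: "'a::chilbert_space set \<Rightarrow> bool" where
  "closed_csubspace V \<longleftrightarrow> 0 \<in> V \<and> (\<forall>x\<in>V. \<forall>y\<in>V. x + y \<in> V) \<and>
     (\<forall>c. \<forall>x\<in>V. scaleC c x \<in> V) \<and> closed V"

definition separable_space :: "'a::topological_space itself \<Rightarrow> bool" where
  "separable_space _ \<longleftrightarrow> (\<exists>D::'a set. countable D \<and> closure D = UNIV)"

definition frame_for :: "'a::chilbert_space set \<Rightarrow> (nat \<Rightarrow> 'a) \<Rightarrow> nat set \<Rightarrow> real \<Rightarrow> real \<Rightarrow> bool" where
  "frame_for V h I a b \<longleftrightarrow> 0 < a \<and> 0 < b \<and> (\<forall>k\<in>I. h k \<in> V) \<and>
     (\<forall>v\<in>V. (\<lambda>k. (cmod (cinner v (h k)))\<^sup>2) summable_on I \<and>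
        a * (norm v)\<^sup>2 \<le> (\<Sum>\<^sub>\<infinity>k\<in>I. (cmod (cinner v (h k)))\<^sup>2) \<and>
        (\<Sum>\<^sub>\<infinity>k\<in>I. (cmod (cinner v (h k)))\<^sup>2) \<le> b * (norm v)\<^sup>2)"

text \<open>The controlled K-g-frame inequalities for a family of terms
  \<open>t f j = \<langle>\<Gamma>\<^sub>j C f, \<Gamma>\<^sub>j C' f\<rangle>\<close> (the family may mix \<open>\<Lambda>\<close>'s and \<open>\<Omega>\<close>'s).\<close>
definition ctrl_Kg_ineq ::
  "('h::chilbert_space \<Rightarrow> 'h) \<Rightarrow> real \<Rightarrow> real \<Rightarrow> ('h \<Rightarrow> nat \<Rightarrow> complex) \<Rightarrow> bool" where
  "ctrl_Kg_ineq K A B t \<longleftrightarrow> (\<forall>f. t f summable_on UNIV \<and>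
      A * (norm (adj K f))\<^sup>2 \<le> Re (\<Sum>\<^sub>\<infinity>j. t f j) \<and>
      Re (\<Sum>\<^sub>\<infinity>j. t f j) \<le> B * (norm f)\<^sup>2)"

definition ctrl_Kg_frame ::
  "('h::chilbert_space \<Rightarrow> 'h) \<Rightarrow> ('h \<Rightarrow> 'h) \<Rightarrow> ('h \<Rightarrow> 'h) \<Rightarrow> (nat \<Rightarrow> 'h \<Rightarrow> 'k::chilbert_space) \<Rightarrow> bool" where
  "ctrl_Kg_frame K C C' \<Gamma> \<longleftrightarrow> (\<exists>A B. 0 < A \<and> A \<le> B \<and>
      ctrl_Kg_ineq K A B (\<lambda>f j. cinner (\<Gamma> j (C f)) (\<Gamma> j (C' f))))"

definition ctrl_Kg_woven ::
  "('h::chilbert_space \<Rightarrow> 'h) \<Rightarrow> ('h \<Rightarrow> 'h) \<Rightarrow> ('h \<Rightarrow> 'h) \<Rightarrow>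
   (nat \<Rightarrow> 'h \<Rightarrow> 'k1::chilbert_space) \<Rightarrow> (nat \<Rightarrow> 'h \<Rightarrow> 'k2::chilbert_space) \<Rightarrow> bool" where
  "ctrl_Kg_woven K C C' \<Lambda> \<Omega> \<longleftrightarrow> (\<exists>A B. 0 < A \<and> A \<le> B \<and> (\<forall>\<sigma>::nat set.
      ctrl_Kg_ineq K A B (\<lambda>f j. if j \<in> \<sigma> then cinner (\<Lambda> j (C f)) (\<Lambda> j (C' f))
                                       else cinner (\<Omega> j (C f)) (\<Omega> j (C' f)))))"

definition woven_K_frames ::
  "('h::chilbert_space \<Rightarrow> 'h) \<Rightarrow> (nat \<Rightarrow> nat \<Rightarrow> 'h) \<Rightarrow> (nat \<Rightarrow> nat set) \<Rightarrow>
   (nat \<Rightarrow> nat \<Rightarrow> 'h) \<Rightarrow> (nat \<Rightarrow> nat set) \<Rightarrow> bool" where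
  "woven_K_frames K u I w Q \<longleftrightarrow> (\<exists>D1 D2. 0 < D1 \<and> D1 \<le> D2 \<and> (\<forall>(\<sigma>::nat set) f.
      (\<lambda>(j,k). (cmod (cinner f (u j k)))\<^sup>2) summable_on {(j,k). j \<in> \<sigma> \<and> k \<in> I j} \<and>
      (\<lambda>(j,k). (cmod (cinner f (w j k)))\<^sup>2) summable_on {(j,k). j \<notin> \<sigma> \<and> k \<in> Q j} \<and>
      D1 * (norm (adj K f))\<^sup>2 \<le>
        (\<Sum>\<^sub>\<infinity>(j,k)\<in>{(j,k). j \<in> \<sigma> \<and> k \<in> I j}. (cmod (cinner f (u j k)))\<^sup>2) +
        (\<Sum>\<^sub>\<infinity>(j,k)\<in>{(j,k). j \<notin> \<sigma> \<and> k \<in> Q j}. (cmod (cinner f (w j k)))\<^sup>2) \<and>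
      (\<Sum>\<^sub>\<infinity>(j,k)\<in>{(j,k). j \<in> \<sigma> \<and> k \<in> I j}. (cmod (cinner f (u j k)))\<^sup>2) +
        (\<Sum>\<^sub>\<infinity>(j,k)\<in>{(j,k). j \<notin> \<sigma> \<and> k \<in> Q j}. (cmod (cinner f (w j k)))\<^sup>2)
        \<le> D2 * (norm f)\<^sup>2))"

end

theory Submission
  imports Defs
begin

text \<open>Let \<open>R = (CC')\<^sup>1\<^sup>/\<^sup>2\<close>. Since \<open>\<Lambda>\<^sub>j\<^sup>*\<Lambda>\<^sub>j\<close> commutes with \<open>C\<close> and \<open>C'\<close>, it commutes with
  \<open>R\<^sup>2 = CC'\<close> and hence with \<open>R\<close>, so \<open>\<langle>\<Lambda>\<^sub>j C f, \<Lambda>\<^sub>j C' f\<rangle> = \<parallel>\<Lambda>\<^sub>j R f\<parallel>\<^sup>2\<close>. Moreover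
  \<open>\<langle>f, R \<Lambda>\<^sub>j\<^sup>* f\<^sub>j\<^sub>k\<rangle> = \<langle>\<Lambda>\<^sub>j R f, f\<^sub>j\<^sub>k\<rangle>\<close>, so the frame inequalities of \<open>{f\<^sub>j\<^sub>k}\<^sub>k\<close> at the vector
  \<open>\<Lambda>\<^sub>j R f \<in> H\<^sub>j\<close> squeeze each inner sum over \<open>k\<close> between \<open>\<alpha> \<parallel>\<Lambda>\<^sub>j R f\<parallel>\<^sup>2\<close> and
  \<open>\<beta> \<parallel>\<Lambda>\<^sub>j R f\<parallel>\<^sup>2\<close>, and likewise for \<open>\<Omega>\<close>. Summing over \<open>j\<close> (Tonelli for nonnegative double
  sums), the woven sums of the two statements agree up to the factors \<open>min \<alpha> \<alpha>'\<close> and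
  \<open>max \<beta> \<beta>'\<close>, uniformly in \<open>\<sigma>\<close>, and the bounds transfer in both directions.\<close>

lemma cinner_zero_left [simp]: "cinner (0::'a::complex_inner) y = 0"
  using cinner_add_left[of "0::'a" 0 y] by simp

lemma cinner_add_right: "cinner (x::'a::complex_inner) (y + z) = cinner x y + cinner x z"
  by (metis cinner_commute cinner_add_left complex_cnj_add)

lemma cinner_zero_right [simp]: "cinner (x::'a::complex_inner) 0 = 0"
  by (metis cinner_commute cinner_zero_left complex_cnj_zero)

lemma cinner_minus_left: "cinner (- x::'a::complex_inner) y = - cinner x y"
  using cinner_add_left[of x "-x" y] by (simp add: eq_neg_iff_add_eq_0 add.commute)

lemma cinner_diff_left: "cinner (x - z::'a::complex_inner) y = cinner x y - cinner z y"
  using cinner_add_left[of x "-z" y] cinner_minus_left[of z y] by simp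

lemma cinner_minus_right: "cinner (x::'a::complex_inner) (- y) = - cinner x y"
  by (metis cinner_commute cinner_minus_left complex_cnj_minus)

lemma cinner_diff_right: "cinner (x::'a::complex_inner) (y - z) = cinner x y - cinner x z"
  by (metis cinner_commute cinner_diff_left complex_cnj_diff)

lemma cinner_scaleC_right: "cinner (x::'a::complex_inner) (scaleC r y) = cnj r * cinner x y"
  by (metis cinner_commute cinner_scaleC_left complex_cnj_mult)

lemma cinner_scaleR_right: "cinner (x::'a::complex_inner) (scaleR r y) = of_real r * cinner x y"
  by (simp add: scaleR_scaleC cinner_scaleC_right)

lemma power2_norm_eq_cinner: "(norm (x::'a::complex_inner))\<^sup>2 = Re (cinner x x)"
  using norm_eq_sqrt_cinner[of x] cinner_self_nonneg[of x] by simp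

lemma cinner_self_eq_power2_norm: "cinner (x::'a::complex_inner) x = of_real ((norm x)\<^sup>2)"
  by (metis cinner_self_real power2_norm_eq_cinner)

lemma cinner_ext_right:
  assumes "\<And>x. cinner x u = cinner x (v::'a::complex_inner)"
  shows "u = v"
proof -
  have "cinner (u - v) (u - v) = 0"
    using assms[of "u - v"] by (simp add: cinner_diff_right)
  thus ?thesis by (metis cinner_self_eq_zero eq_iff_diff_eq_0)
qed

lemma power2_norm_add:
  "(norm (a + b::'a::complex_inner))\<^sup>2 = (norm a)\<^sup>2 + 2 * Re (cinner a b) + (norm b)\<^sup>2"
proof -
  have "Re (cinner b a) = Re (cinner a b)" by (metis cinner_commute complex_cnj_cnj cnj.sel(1))
  thus ?thesis by (simp add: power2_norm_eq_cinner cinner_add_left cinner_add_right)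
qed

lemma power2_norm_diff:
  "(norm (a - b::'a::complex_inner))\<^sup>2 = (norm a)\<^sup>2 - 2 * Re (cinner a b) + (norm b)\<^sup>2"
  using power2_norm_add[of a "-b"] by (simp add: cinner_minus_right)

lemma parallelogram_law:
  "(norm (a + b::'a::complex_inner))\<^sup>2 + (norm (a - b))\<^sup>2 = 2 * (norm a)\<^sup>2 + 2 * (norm b)\<^sup>2"
  by (simp add: power2_norm_add power2_norm_diff)

lemma quadratic_nonneg_imp_discriminant_le:
  fixes a b c :: real
  assumes "0 \<le> c" and nonneg: "\<And>t. 0 \<le> a + 2 * t * b + t\<^sup>2 * c"
  shows "b\<^sup>2 \<le> a * c"
proof (cases "c = 0")
  case True
  have "b = 0"
  proof (rule ccontr)
    assume "b \<noteq> 0"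
    have "0 \<le> a + 2 * (- (a + 1) / (2 * b)) * b" using nonneg[of "- (a + 1) / (2 * b)"] True by simp
    also have "\<dots> = -1" using \<open>b \<noteq> 0\<close> by (simp add: field_simps)
    finally show False by simp
  qed
  thus ?thesis using True by simp
next
  case False
  with \<open>0 \<le> c\<close> have "0 < c" by simp
  have "0 \<le> a + 2 * (- b / c) * b + (- b / c)\<^sup>2 * c" by (rule nonneg)
  also have "\<dots> = a - b\<^sup>2 / c" using \<open>0 < c\<close> by (simp add: power2_eq_square field_simps)
  finally show ?thesis using \<open>0 < c\<close> by (simp add: field_simps)
qed

lemma clinear_add: "clinear T \<Longrightarrow> T (x + y) = T x + T y"
  by (simp add: clinear_def)

lemma clinear_scaleC: "clinear T \<Longrightarrow> T (scaleC c x) = scaleC c (T x)"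
  by (simp add: clinear_def)

lemma clinear_diff: "clinear T \<Longrightarrow> T (x - y) = T x - T y"
  by (metis clinear_add diff_add_cancel eq_diff_eq)

lemma clinear_scaleR: "clinear T \<Longrightarrow> T (scaleR r x) = scaleR r (T x)"
  by (simp add: scaleR_scaleC clinear_scaleC)

lemma bounded_clinear_clinear: "bounded_clinear T \<Longrightarrow> clinear T"
  by (simp add: bounded_clinear_def)

lemma bounded_clinear_pos_bound:
  assumes "bounded_clinear T"
  obtains M where "M > 0" "\<And>x. norm (T x) \<le> M * norm x"
proof -
  obtain M where M: "\<And>x. norm (T x) \<le> M * norm x"
    using assms unfolding bounded_clinear_def by blast
  have "norm (T x) \<le> max M 1 * norm x" for x
    using M[of x] mult_right_mono[of M "max M 1" "norm x"] by simp
  thus ?thesis using that[of "max M 1"] by simp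
qed

lemma bounded_clinear_compose:
  assumes A: "bounded_clinear A" and B: "bounded_clinear B"
  shows "bounded_clinear (\<lambda>x. A (B x))"
proof -
  obtain MA where MA: "MA > 0" "\<And>x. norm (A x) \<le> MA * norm x"
    using bounded_clinear_pos_bound[OF A] by metis
  obtain MB where MB: "\<And>x. norm (B x) \<le> MB * norm x"
    using bounded_clinear_pos_bound[OF B] by metis
  have "norm (A (B x)) \<le> (MA * MB) * norm x" for x
    using order_trans[OF MA(2)[of "B x"] mult_left_mono[OF MB[of x]]] MA(1) by (simp add: mult.assoc)
  thus ?thesis using A B unfolding bounded_clinear_def clinear_def by auto
qed

lemma hermitian_if_real_quadratic_form:
  assumes A: "clinear A" and real: "\<And>x. Im (cinner (A x) x) = 0"
  shows "cinner (A x) y = cinner x (A y)"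
proof -
  define p where "p = cinner (A x) y"
  define q where "q = cinner (A y) x"
  have "cinner (A (x + y)) (x + y) = cinner (A x) x + p + q + cinner (A y) y"
    by (simp add: clinear_add[OF A] cinner_add_left cinner_add_right p_def q_def)
  hence im: "Im p + Im q = 0" using real[of "x + y"] real[of x] real[of y] by simp
  have "cinner (A (x + scaleC \<i> y)) (x + scaleC \<i> y) = cinner (A x) x - \<i> * p + \<i> * q + cinner (A y) y"
    by (simp add: clinear_add[OF A] clinear_scaleC[OF A] cinner_add_left cinner_add_right
        cinner_scaleC_left cinner_scaleC_right p_def q_def algebra_simps)
  hence re: "Re q - Re p = 0" using real[of "x + scaleC \<i> y"] real[of x] real[of y] by simp
  have "p = cnj q" using im re by (intro complex_eqI) auto
  thus ?thesis unfolding p_def q_def by (metis cinner_commute)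
qed

lemma positive_op_self_adjoint:
  assumes "positive_op R"
  shows "cinner (R x) y = cinner x (R y)"
proof -
  have "Im (cinner (R z) z) = 0" for z
    using assms unfolding positive_op_def by (metis Im_complex_of_real)
  thus ?thesis using assms unfolding positive_op_def bounded_clinear_def
    by (intro hermitian_if_real_quadratic_form) auto
qed

lemma positive_form_Cauchy_Schwarz:
  assumes A: "clinear A" and herm: "\<And>x y. cinner (A x) y = cinner x (A y)"
    and pos: "\<And>x. 0 \<le> Re (cinner (A x) x)"
  shows "(cmod (cinner (A y) z))\<^sup>2 \<le> Re (cinner (A y) y) * Re (cinner (A z) z)"
proof (cases "cinner (A y) z = 0")
  case True
  thus ?thesis using pos[of y] pos[of z] by simp
next
  case False
  define b where "b = cinner (A y) z"
  define u where "u = b / of_real (cmod b)"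
  have b0: "(of_real (cmod b)::complex) \<noteq> 0" using False b_def by simp
  have bb: "b * cnj b = of_real ((cmod b)\<^sup>2)" by (rule complex_norm_square[symmetric])
  have uu: "u * cnj u = 1"
  proof -
    have "u * cnj u = (b * cnj b) / (of_real (cmod b) * of_real (cmod b))"
      unfolding u_def by (simp add: complex_cnj_divide)
    also have "\<dots> = 1" using b0 unfolding bb by (simp add: power2_eq_square)
    finally show ?thesis .
  qed
  have ub: "cnj u * b = of_real (cmod b)"
  proof -
    have "cnj u * b = (b * cnj b) / of_real (cmod b)"
      unfolding u_def by (simp add: complex_cnj_divide mult.commute)
    also have "\<dots> = of_real (cmod b)" using b0 unfolding bb by (simp add: power2_eq_square)
    finally show ?thesis .
  qed
  have ub': "u * cnj b = of_real (cmod b)"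
    using arg_cong[OF ub, of cnj] by (simp add: mult.commute)
  have zy: "cinner (A z) y = cnj b" unfolding b_def by (metis herm cinner_commute)
  \<comment> \<open>expand the form at \<open>y + t u z\<close>, with the phase \<open>u\<close> making the cross term real\<close>
  have "0 \<le> Re (cinner (A y) y) + 2 * t * cmod b + t\<^sup>2 * Re (cinner (A z) z)" for t
  proof -
    define s where "s = of_real t * u"
    have "cinner (A (y + scaleC s z)) (y + scaleC s z) =
       cinner (A y) y + cnj s * b + s * cnj b + s * cnj s * cinner (A z) z"
      by (simp add: clinear_add[OF A] clinear_scaleC[OF A] cinner_add_left cinner_add_right
        cinner_scaleC_left cinner_scaleC_right b_def[symmetric] zy algebra_simps)
    also have "cnj s * b = of_real (t * cmod b)" unfolding s_def using ub by (simp add: mult.assoc)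
    also have "s * cnj b = of_real (t * cmod b)" unfolding s_def using ub' by (simp add: mult.assoc)
    also have "s * cnj s = of_real (t\<^sup>2)" unfolding s_def using uu
      by (simp add: power2_eq_square algebra_simps)
    finally show ?thesis using pos[of "y + scaleC s z"] by simp
  qed
  from quadratic_nonneg_imp_discriminant_le[OF pos this] show ?thesis unfolding b_def by simp
qed

lemma norm_cinner_le: "cmod (cinner (x::'a::complex_inner) y) \<le> norm x * norm y"
proof -
  have "(cmod (cinner (id x) y))\<^sup>2 \<le> Re (cinner (id x) x) * Re (cinner (id y) y)"
    by (rule positive_form_Cauchy_Schwarz) (auto simp: clinear_def cinner_self_nonneg)
  hence "(cmod (cinner x y))\<^sup>2 \<le> (norm x * norm y)\<^sup>2"
    by (simp add: power2_norm_eq_cinner power_mult_distrib)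
  thus ?thesis by (rule power2_le_imp_le) simp
qed

section \<open>Riesz representation and adjoints\<close>

lemma nearest_orthogonal:
  fixes u m :: "'a::complex_inner"
  assumes nearest: "\<And>s. norm u \<le> norm (u - scaleC s m)"
  shows "cinner u m = 0"
proof -
  define b where "b = cinner u m"
  have "0 \<le> 0 + 2 * t * (- (cmod b)\<^sup>2) + t\<^sup>2 * ((cmod b)\<^sup>2 * (norm m)\<^sup>2)" for t
  proof -
    define s where "s = of_real t * b"
    have bb: "cnj b * b = of_real ((cmod b)\<^sup>2)" by (metis complex_norm_square mult.commute)
    have "cinner u (scaleC s m) = of_real (t * (cmod b)\<^sup>2)"
      unfolding s_def cinner_scaleC_right b_def[symmetric] by (simp add: bb mult.assoc)
    moreover have "(norm (scaleC s m))\<^sup>2 = t\<^sup>2 * ((cmod b)\<^sup>2 * (norm m)\<^sup>2)"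
      unfolding norm_scaleC s_def by (simp add: norm_mult power_mult_distrib)
    moreover have "(norm u)\<^sup>2 \<le> (norm (u - scaleC s m))\<^sup>2"
      using nearest[of s] by (simp add: power_mono)
    ultimately show ?thesis unfolding power2_norm_diff by simp
  qed
  from quadratic_nonneg_imp_discriminant_le[OF _ this] have "((cmod b)\<^sup>2)\<^sup>2 \<le> 0" by simp
  thus ?thesis unfolding b_def by simp
qed

lemma minimizing_sequence_Cauchy:
  fixes x0 :: "'a::complex_inner" and x :: "nat \<Rightarrow> 'a"
  assumes mid: "\<And>k m. d \<le> (norm (x0 - scaleR (1/2) (x k + x m)))\<^sup>2"
    and near: "\<And>k. (norm (x0 - x k))\<^sup>2 < d + 1 / (real k + 1)"
  shows "Cauchy x"
proof (rule CauchyI)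
  have close: "(norm (x k - x m))\<^sup>2 \<le> 2 / (real k + 1) + 2 / (real m + 1)" for k m
  proof -
    have "x0 - x k + (x0 - x m) = scaleR 2 (x0 - scaleR (1/2) (x k + x m))"
      by (simp add: algebra_simps scaleR_2)
    hence "4 * d \<le> (norm (x0 - x k + (x0 - x m)))\<^sup>2"
      using mid[of k m] by (simp add: power_mult_distrib)
    moreover have "norm (x0 - x k - (x0 - x m)) = norm (x k - x m)"
      by (simp add: norm_minus_commute)
    ultimately show ?thesis
      using parallelogram_law[of "x0 - x k" "x0 - x m"] near[of k] near[of m] by simp
  qed
  fix e :: real
  assume "0 < e"
  obtain K :: nat where K: "4 / e\<^sup>2 < real K" using reals_Archimedean2 by blast
  have "4 / (real K + 1) < e\<^sup>2"
    using K \<open>0 < e\<close> by (simp add: field_simps) (smt (verit) zero_less_power)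
  have "norm (x m - x n) < e" if "m \<ge> K" "n \<ge> K" for m n
  proof -
    have "2 / (real m + 1) \<le> 2 / (real K + 1)" "2 / (real n + 1) \<le> 2 / (real K + 1)"
      using that by (auto intro: divide_left_mono)
    hence "(norm (x m - x n))\<^sup>2 < e\<^sup>2"
      using close[of m n] \<open>4 / (real K + 1) < e\<^sup>2\<close> by simp
    thus ?thesis using \<open>0 < e\<close> by (simp add: power_less_imp_less_base)
  qed
  thus "\<exists>M. \<forall>m\<ge>M. \<forall>n\<ge>M. norm (x m - x n) < e" by blast
qed

lemma nearest_point_exists:
  fixes N :: "'a::chilbert_space set"
  assumes "closed N" "N \<noteq> {}"
    and mid: "\<And>n m. n \<in> N \<Longrightarrow> m \<in> N \<Longrightarrow> scaleR (1/2) (n + m) \<in> N"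
  obtains n where "n \<in> N" "\<And>m. m \<in> N \<Longrightarrow> norm (x0 - n) \<le> norm (x0 - m)"
proof -
  define F where "F = (\<lambda>n. (norm (x0 - n))\<^sup>2) ` N"
  define d where "d = Inf F"
  have d_le: "d \<le> (norm (x0 - n))\<^sup>2" if "n \<in> N" for n
    unfolding d_def F_def using that by (auto intro!: cInf_lower bdd_belowI[of _ 0])
  have "F \<noteq> {}" using \<open>N \<noteq> {}\<close> unfolding F_def by simp
  have "\<exists>n\<in>N. (norm (x0 - n))\<^sup>2 < d + 1 / (real k + 1)" for k
  proof -
    have "Inf F < d + 1 / (real k + 1)" unfolding d_def by (simp add: add_pos_pos)
    from cInf_lessD[OF \<open>F \<noteq> {}\<close> this] show ?thesis unfolding F_def by blast
  qed
  then obtain x where x: "\<And>k. x k \<in> N" "\<And>k. (norm (x0 - x k))\<^sup>2 < d + 1 / (real k + 1)"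
    by metis
  have "Cauchy x"
    using d_le[OF mid[OF x(1) x(1)]] x(2) by (rule minimizing_sequence_Cauchy)
  then obtain n where lim: "x \<longlonglongrightarrow> n" using Cauchy_convergent_iff convergent_def by blast
  have "n \<in> N" using closed_sequentially[OF \<open>closed N\<close> x(1) lim] .
  have "(norm (x0 - n))\<^sup>2 \<le> d"
  proof (rule tendsto_le[OF trivial_limit_sequentially])
    show "(\<lambda>k. d + 1 / (real k + 1)) \<longlonglongrightarrow> d"
      using LIMSEQ_inverse_real_of_nat_add[of d] by (simp add: inverse_eq_divide add.commute)
    show "(\<lambda>k. (norm (x0 - x k))\<^sup>2) \<longlonglongrightarrow> (norm (x0 - n))\<^sup>2"
      by (intro tendsto_intros lim)
    show "\<forall>\<^sub>F k in sequentially. (norm (x0 - x k))\<^sup>2 \<le> d + 1 / (real k + 1)"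
      by (intro always_eventually allI less_imp_le x(2))
  qed
  hence "norm (x0 - n) \<le> norm (x0 - m)" if "m \<in> N" for m
    using d_le[OF that] by (meson power2_le_imp_le norm_ge_zero order_trans)
  with \<open>n \<in> N\<close> show ?thesis by (rule that)
qed

lemma riesz_representation:
  fixes g :: "'a::chilbert_space \<Rightarrow> complex"
  assumes add: "\<And>x y. g (x + y) = g x + g y" and scale: "\<And>c x. g (scaleC c x) = c * g x"
    and bound: "\<And>x. cmod (g x) \<le> M * norm x"
  obtains z where "\<And>x. g x = cinner x z"
proof (cases "\<forall>x. g x = 0")
  case True
  thus ?thesis using that[of 0] by simp
next
  case False
  then obtain x0 where gx0: "g x0 \<noteq> 0" by blast
  have diff: "g (x - y) = g x - g y" for x y using add[of "x - y" y] by simp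
  define N where "N = {n. g n = 0}"
  have "0 \<in> N" using add[of 0 0] unfolding N_def by simp
  have lin: "scaleC c n + scaleC c' m \<in> N" if "n \<in> N" "m \<in> N" for c c' n m
    using that add scale unfolding N_def by simp
  have "closed N"
    unfolding closed_sequential_limits
  proof (intro allI impI, elim conjE)
    fix x l assume "\<forall>k. x k \<in> N" "x \<longlonglongrightarrow> l"
    have "cmod (g l) \<le> M * norm (x k - l)" for k
      using bound[of "x k - l"] \<open>\<forall>k. x k \<in> N\<close> unfolding N_def by (simp add: diff)
    moreover have "(\<lambda>k. M * norm (x k - l)) \<longlonglongrightarrow> M * 0"
      using \<open>x \<longlonglongrightarrow> l\<close> by (intro tendsto_intros) (simp add: LIM_zero tendsto_norm_zero)
    ultimately have "cmod (g l) \<le> 0"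
      by (intro tendsto_le[OF trivial_limit_sequentially _ tendsto_const]) (auto simp: always_eventually)
    thus "l \<in> N" unfolding N_def by simp
  qed
  moreover have "scaleR (1/2) (n + m) \<in> N" if "n \<in> N" "m \<in> N" for n m
    using lin[OF that, of "1/2" "1/2"] by (simp add: scaleR_scaleC scaleC_add_right)
  ultimately obtain n where "n \<in> N" and nearest: "\<And>m. m \<in> N \<Longrightarrow> norm (x0 - n) \<le> norm (x0 - m)"
    using nearest_point_exists[of N x0] \<open>0 \<in> N\<close> by blast
  define u where "u = x0 - n"
  have gu: "g u = g x0" using \<open>n \<in> N\<close> unfolding u_def N_def by (simp add: diff)
  have orth: "cinner u m = 0" if "m \<in> N" for m
  proof (rule nearest_orthogonal)
    fix s
    have "n + scaleC s m \<in> N" using lin[OF \<open>n \<in> N\<close> that, of 1 s] by (simp add: scaleC_one)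
    from nearest[OF this] show "norm u \<le> norm (u - scaleC s m)"
      unfolding u_def by (simp add: algebra_simps)
  qed
  have "u \<noteq> 0" using gu gx0 \<open>0 \<in> N\<close> unfolding N_def by auto
  hence nu: "(norm u)\<^sup>2 > 0" by simp
  \<comment> \<open>\<open>u\<close> spans the orthogonal complement of the kernel\<close>
  have "g x = cinner x (scaleC (cnj (g u) / of_real ((norm u)\<^sup>2)) u)" for x
  proof -
    define w where "w = x - scaleC (g x / g u) u"
    have "g w = 0" unfolding w_def using gu gx0 by (simp add: diff scale)
    hence "cinner w u = 0" using orth unfolding N_def by (metis cinner_commute complex_cnj_zero mem_Collect_eq)
    hence "cinner x u = (g x / g u) * of_real ((norm u)\<^sup>2)"
      unfolding w_def by (simp add: cinner_diff_left cinner_scaleC_left cinner_self_eq_power2_norm)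
    thus ?thesis unfolding cinner_scaleC_right using gu gx0 nu by (simp add: field_simps)
  qed
  thus ?thesis by (rule that)
qed

lemma adjoint_exists:
  assumes T: "bounded_clinear (T::'a::chilbert_space \<Rightarrow> 'b::chilbert_space)"
  shows "\<exists>S. \<forall>x y. cinner (T x) y = cinner x (S y)"
proof -
  obtain M where M: "\<And>x. norm (T x) \<le> M * norm x" using bounded_clinear_pos_bound[OF T] by metis
  have TL: "clinear T" using T by (rule bounded_clinear_clinear)
  have "\<exists>z. \<forall>x. cinner (T x) y = cinner x z" for y
  proof -
    have "cinner (T (x1 + x2)) y = cinner (T x1) y + cinner (T x2) y" for x1 x2
      by (simp add: clinear_add[OF TL] cinner_add_left)
    moreover have "cinner (T (scaleC c x)) y = c * cinner (T x) y" for c x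
      by (simp add: clinear_scaleC[OF TL] cinner_scaleC_left)
    moreover have "cmod (cinner (T x) y) \<le> (M * norm y) * norm x" for x
      using norm_cinner_le[of "T x" y] M[of x] mult_right_mono[of "norm (T x)" "M * norm x" "norm y"]
      by (simp add: algebra_simps)
    ultimately obtain z where "\<And>x. cinner (T x) y = cinner x z"
      by (rule riesz_representation) blast
    thus ?thesis by blast
  qed
  thus ?thesis by metis
qed

lemma cinner_adj:
  assumes "bounded_clinear (T::'a::chilbert_space \<Rightarrow> 'b::chilbert_space)"
  shows "cinner (T x) y = cinner x (adj T y)"
  using someI_ex[OF adjoint_exists[OF assms]] unfolding adj_def by blast

lemma bounded_clinear_adj:
  assumes T: "bounded_clinear (T::'a::chilbert_space \<Rightarrow> 'b::chilbert_space)"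
  shows "bounded_clinear (adj T)"
proof -
  obtain M where M: "M > 0" "\<And>x. norm (T x) \<le> M * norm x" using bounded_clinear_pos_bound[OF T] by metis
  have "adj T (y1 + y2) = adj T y1 + adj T y2" for y1 y2
    by (rule cinner_ext_right) (simp add: cinner_adj[OF T, symmetric] cinner_add_right)
  moreover have "adj T (scaleC c y) = scaleC c (adj T y)" for c y
    by (rule cinner_ext_right) (simp add: cinner_adj[OF T, symmetric] cinner_scaleC_right)
  moreover have "norm (adj T y) \<le> M * norm y" for y
  proof -
    have "(norm (adj T y))\<^sup>2 = Re (cinner (T (adj T y)) y)"
      by (simp add: cinner_adj[OF T] power2_norm_eq_cinner)
    also have "\<dots> \<le> cmod (cinner (T (adj T y)) y)" by (rule complex_Re_le_cmod)
    also have "\<dots> \<le> norm (T (adj T y)) * norm y" by (rule norm_cinner_le)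
    also have "\<dots> \<le> M * norm (adj T y) * norm y" using M(2) by (simp add: mult_right_mono)
    finally have "norm (adj T y) * norm (adj T y) \<le> (M * norm y) * norm (adj T y)"
      by (simp add: power2_eq_square algebra_simps)
    thus ?thesis using M(1) by (cases "norm (adj T y) = 0") (simp_all add: mult_le_cancel_right)
  qed
  ultimately show ?thesis unfolding bounded_clinear_def clinear_def by blast
qed

section \<open>Commuting with a positive square root\<close>

lemma positive_op_power2_norm_le:
  assumes R: "positive_op R" and M: "M > 0" "\<And>x. norm (R x) \<le> M * norm x"
  shows "(norm (R y))\<^sup>2 \<le> M * Re (cinner (R y) y)"
proof -
  have RL: "clinear R" using R unfolding positive_op_def bounded_clinear_def by simp
  have pos: "\<And>x. 0 \<le> Re (cinner (R x) x)" using R unfolding positive_op_def by simp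
  define t where "t = Re (cinner (R y) y)"
  have "cmod (cinner (R y) (R y)) = (norm (R y))\<^sup>2"
    unfolding cinner_self_eq_power2_norm norm_of_real by simp
  hence "((norm (R y))\<^sup>2)\<^sup>2 \<le> t * Re (cinner (R (R y)) (R y))"
    using positive_form_Cauchy_Schwarz[OF RL positive_op_self_adjoint[OF R] pos, of y "R y"]
    by (simp add: t_def)
  also have "\<dots> \<le> t * (M * (norm (R y))\<^sup>2)"
  proof (rule mult_left_mono)
    have "Re (cinner (R (R y)) (R y)) \<le> cmod (cinner (R (R y)) (R y))" by (rule complex_Re_le_cmod)
    also have "\<dots> \<le> norm (R (R y)) * norm (R y)" by (rule norm_cinner_le)
    also have "\<dots> \<le> M * norm (R y) * norm (R y)" using M(2) by (simp add: mult_right_mono)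
    finally show "Re (cinner (R (R y)) (R y)) \<le> M * (norm (R y))\<^sup>2" by (simp add: power2_eq_square)
    show "0 \<le> t" unfolding t_def by (rule pos)
  qed
  finally have "(norm (R y))\<^sup>2 * (norm (R y))\<^sup>2 \<le> (M * t) * (norm (R y))\<^sup>2"
    by (simp add: power2_eq_square algebra_simps)
  moreover have "0 \<le> M * t" using M(1) pos[of y] unfolding t_def by simp
  ultimately show ?thesis unfolding t_def[symmetric]
    by (metis mult_right_le_imp_le zero_le_power2 order_le_less mult_zero_right)
qed

lemma positive_op_shift_contraction:
  fixes R :: "'a::chilbert_space \<Rightarrow> 'a"
  assumes R: "positive_op R" and M: "M > 0" "\<And>x. norm (R x) \<le> M * norm x"
    and below: "a > 0" "\<And>y. a * norm y \<le> norm (R y)"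
  obtains q where "0 \<le> q" "q < 1" "\<And>y. norm (y - scaleR (1/M) (R y)) \<le> q * norm y"
proof -
  define q where "q = sqrt (max (1 - (a / M)\<^sup>2) 0)"
  have "0 \<le> q" unfolding q_def by simp
  moreover have "q < 1" unfolding q_def using below(1) M(1) by simp
  moreover have "norm (y - scaleR (1/M) (R y)) \<le> q * norm y" for y
  proof -
    define t where "t = Re (cinner (R y) y)"
    define n where "n = (norm (R y))\<^sup>2"
    have "Re (cinner y (R y)) = t" using positive_op_self_adjoint[OF R, of y y] t_def by simp
    hence "(norm (y - scaleR (1/M) (R y)))\<^sup>2 = (norm y)\<^sup>2 - 2 * (t / M) + n / M\<^sup>2"
      using M(1) unfolding n_def by (simp add: power2_norm_diff cinner_scaleR_right power_divide)
    also have "\<dots> \<le> (norm y)\<^sup>2 - n / M\<^sup>2"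
    proof -
      have "n / M \<le> t"
        using positive_op_power2_norm_le[OF R M, of y] M(1) unfolding n_def t_def
        by (simp add: pos_divide_le_eq mult.commute)
      hence "n / M\<^sup>2 \<le> t / M"
        using M(1) divide_right_mono[of "n / M" t M] by (simp add: power2_eq_square)
      thus ?thesis by linarith
    qed
    also have "\<dots> \<le> (norm y)\<^sup>2 - (a * norm y)\<^sup>2 / M\<^sup>2"
      using power_mono[OF below(2)[of y], of 2] below(1) divide_right_mono[of _ n "M\<^sup>2"]
      unfolding n_def by simp
    also have "\<dots> = (1 - (a / M)\<^sup>2) * (norm y)\<^sup>2"
      by (simp add: power_mult_distrib power_divide algebra_simps)
    also have "\<dots> \<le> q\<^sup>2 * (norm y)\<^sup>2" unfolding q_def by (simp add: mult_right_mono)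
    finally have "(norm (y - scaleR (1/M) (R y)))\<^sup>2 \<le> (q * norm y)\<^sup>2"
      by (simp add: power_mult_distrib)
    thus ?thesis by (rule power2_le_imp_le) (simp add: \<open>0 \<le> q\<close>)
  qed
  ultimately show ?thesis by (rule that)
qed

lemma zero_if_norm_le_under_contraction:
  fixes D :: "'a::real_normed_vector \<Rightarrow> 'b::real_normed_vector" and X :: "'a \<Rightarrow> 'a"
  assumes q: "0 \<le> q" "q < 1" and X: "\<And>x. norm (X x) \<le> q * norm x"
    and D: "\<And>x. norm (D x) \<le> B * norm x" and step: "\<And>x. norm (D x) \<le> norm (D (X x))"
  shows "D x = 0"
proof -
  define B' where "B' = max B 0"
  have bound: "norm (D x) \<le> q ^ n * B' * norm x" for n x
  proof (induction n arbitrary: x)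
    case 0
    show ?case using D[of x] mult_right_mono[of B B' "norm x"] by (simp add: B'_def)
  next
    case (Suc n)
    have "norm (D x) \<le> q ^ n * B' * norm (X x)" using step[of x] Suc[of "X x"] by linarith
    also have "\<dots> \<le> q ^ n * B' * (q * norm x)"
      using X[of x] q by (intro mult_left_mono) (auto simp: B'_def)
    finally show ?case by (simp add: algebra_simps)
  qed
  have "(\<lambda>n. q ^ n * B' * norm x) \<longlonglongrightarrow> 0 * B' * norm x"
    using q by (intro tendsto_intros LIMSEQ_power_zero) simp
  hence "norm (D x) \<le> 0 * B' * norm x"
    by (rule tendsto_le[OF trivial_limit_sequentially _ tendsto_const]) (simp add: bound)
  thus ?thesis by simp
qed

text \<open>The commutator \<open>D = RT - TR\<close> anticommutes with \<open>R\<close>; writing \<open>R = M (I - X)\<close> with a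
  contraction \<open>X\<close> this becomes \<open>2 D = X D + D X\<close>, so \<open>\<parallel>D x\<parallel> \<le> \<parallel>D (X x)\<parallel>\<close>.\<close>
lemma commute_if_commute_with_square:
  fixes R T :: "'a::chilbert_space \<Rightarrow> 'a"
  assumes R: "positive_op R" and below: "a > 0" "\<And>y. a * norm y \<le> norm (R y)"
    and T: "bounded_clinear T" and comm: "\<And>x. T (R (R x)) = R (R (T x))"
  shows "T (R x) = R (T x)"
proof -
  have RB: "bounded_clinear R" using R unfolding positive_op_def by simp
  have RL: "clinear R" and TL: "clinear T" using RB T by (simp_all add: bounded_clinear_clinear)
  obtain M where M: "M > 0" "\<And>x. norm (R x) \<le> M * norm x" using bounded_clinear_pos_bound[OF RB] by metis
  obtain MT where MT: "MT > 0" "\<And>x. norm (T x) \<le> MT * norm x" using bounded_clinear_pos_bound[OF T] by metis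
  obtain q where q: "0 \<le> q" "q < 1" "\<And>y. norm (y - scaleR (1/M) (R y)) \<le> q * norm y"
    using positive_op_shift_contraction[OF R M below] by metis
  define X where "X y = y - scaleR (1/M) (R y)" for y
  define D where "D x = R (T x) - T (R x)" for x
  have D_diff: "D (x - scaleR r y) = D x - scaleR r (D y)" for x y r
    unfolding D_def by (simp add: clinear_diff[OF RL] clinear_diff[OF TL] clinear_scaleR[OF RL]
        clinear_scaleR[OF TL] algebra_simps)
  have anti: "R (D x) + D (R x) = 0" for x
    unfolding D_def by (simp add: clinear_diff[OF RL] comm)
  have twice: "scaleR 2 (D x) = X (D x) + D (X x)" for x
  proof -
    have "X (D x) + D (X x) = scaleR 2 (D x) - scaleR (1/M) (R (D x) + D (R x))"
      unfolding X_def D_diff by (simp add: algebra_simps scaleR_2)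
    thus ?thesis using anti by simp
  qed
  have step: "norm (D x) \<le> norm (D (X x))" for x
  proof -
    have "2 * norm (D x) = norm (X (D x) + D (X x))" unfolding twice[symmetric] by simp
    also have "\<dots> \<le> norm (X (D x)) + norm (D (X x))" by (rule norm_triangle_ineq)
    also have "norm (X (D x)) \<le> norm (D x)"
      using q(3)[of "D x"] q(2) mult_right_mono[of q 1 "norm (D x)"] unfolding X_def by simp
    finally show ?thesis by simp
  qed
  have bound: "norm (D x) \<le> (M * MT + MT * M) * norm x" for x
  proof -
    have "norm (D x) \<le> norm (R (T x)) + norm (T (R x))" unfolding D_def by (rule norm_triangle_ineq4)
    also have "\<dots> \<le> M * (MT * norm x) + MT * (M * norm x)"
      using order_trans[OF M(2)[of "T x"] mult_left_mono[OF MT(2)[of x]]]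
        order_trans[OF MT(2)[of "R x"] mult_left_mono[OF M(2)[of x]]] M(1) MT(1)
      by (intro add_mono) simp_all
    finally show ?thesis by (simp add: algebra_simps)
  qed
  have "D x = 0" for x
    by (rule zero_if_norm_le_under_contraction[OF q(1,2) _ bound step]) (simp add: X_def q(3))
  thus ?thesis unfolding D_def by (metis eq_iff_diff_eq_0)
qed

lemma controlled_term_eq_power2_norm:
  fixes R C C' :: "'h::chilbert_space \<Rightarrow> 'h" and G :: "'h \<Rightarrow> 'k::chilbert_space"
  assumes R: "positive_op R" "a > 0" "\<And>y. a * norm y \<le> norm (R y)"
    and C': "positive_op C'" and comm: "C \<circ> C' = C' \<circ> C" and R_sq: "R \<circ> R = C \<circ> C'"
    and G: "bounded_clinear G"
    and commG: "C \<circ> (adj G \<circ> G) = (adj G \<circ> G) \<circ> C \<and> C' \<circ> (adj G \<circ> G) = (adj G \<circ> G) \<circ> C'"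
  shows "cinner (G (C f)) (G (C' f)) = of_real ((norm (G (R f)))\<^sup>2)"
proof -
  define T where "T x = adj G (G x)" for x
  have TC: "C (T x) = T (C x)" and TC': "C' (T x) = T (C' x)" for x
    using fun_cong[OF conjunct1[OF commG], of x] fun_cong[OF conjunct2[OF commG], of x]
    by (simp_all add: T_def)
  have RR: "R (R x) = C (C' x)" and CC': "C' (C x) = C (C' x)" for x
    using fun_cong[OF R_sq, of x] fun_cong[OF comm, of x] by simp_all
  have TR: "T (R x) = R (T x)" for x
  proof (rule commute_if_commute_with_square[OF R])
    show "bounded_clinear T"
      unfolding T_def by (rule bounded_clinear_compose[OF bounded_clinear_adj[OF G] G])
    show "T (R (R x)) = R (R (T x))" for x
      unfolding RR by (simp add: TC[symmetric] TC'[symmetric])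
  qed
  have "cinner (G (C f)) (G (C' f)) = cinner (C f) (T (C' f))"
    unfolding T_def by (rule cinner_adj[OF G])
  also have "\<dots> = cinner (C' (C f)) (T f)"
    by (simp add: TC' positive_op_self_adjoint[OF C'])
  also have "\<dots> = cinner (R f) (T (R f))"
    by (simp add: CC' RR[symmetric] TR positive_op_self_adjoint[OF R(1)])
  also have "\<dots> = cinner (G (R f)) (G (R f))"
    unfolding T_def by (rule cinner_adj[OF G, symmetric])
  finally show ?thesis by (simp add: cinner_self_eq_power2_norm)
qed

lemma cinner_positive_adj:
  assumes "positive_op R" and "bounded_clinear G"
  shows "cinner f (R (adj G v)) = cinner (G (R f)) v"
  by (simp add: positive_op_self_adjoint[OF assms(1), symmetric] cinner_adj[OF assms(2)])

lemma frame_bounds_pullback: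
  assumes frame: "frame_for V h I \<alpha> \<beta>" and R: "positive_op R"
    and G: "bounded_clinear G" "range G \<subseteq> V"
  shows "(\<lambda>k. (cmod (cinner f (R (adj G (h k)))))\<^sup>2) summable_on I \<and>
    \<alpha> * (norm (G (R f)))\<^sup>2 \<le> (\<Sum>\<^sub>\<infinity>k\<in>I. (cmod (cinner f (R (adj G (h k)))))\<^sup>2) \<and>
    (\<Sum>\<^sub>\<infinity>k\<in>I. (cmod (cinner f (R (adj G (h k)))))\<^sup>2) \<le> \<beta> * (norm (G (R f)))\<^sup>2"
  using frame G unfolding frame_for_def by (simp add: cinner_positive_adj[OF R] image_subset_iff)

lemma GL_plus_square_root_bounded_below:
  fixes R C C' :: "'h::chilbert_space \<Rightarrow> 'h"
  assumes C: "GL_plus C" and C': "GL_plus C'" and R: "positive_op R" and R_sq: "R \<circ> R = C \<circ> C'"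
  obtains a where "a > 0" "\<And>y. a * norm y \<le> norm (R y)"
proof -
  obtain S where S: "bounded_clinear S" "S \<circ> C = id" using C unfolding GL_plus_def by blast
  obtain S' where S': "bounded_clinear S'" "S' \<circ> C' = id" using C' unfolding GL_plus_def by blast
  have RB: "bounded_clinear R" using R unfolding positive_op_def by simp
  obtain MS where MS: "MS > 0" "\<And>x. norm (S x) \<le> MS * norm x"
    using bounded_clinear_pos_bound[OF S(1)] by metis
  obtain MS' where MS': "MS' > 0" "\<And>x. norm (S' x) \<le> MS' * norm x"
    using bounded_clinear_pos_bound[OF S'(1)] by metis
  obtain MR where MR: "MR > 0" "\<And>x. norm (R x) \<le> MR * norm x"
    using bounded_clinear_pos_bound[OF RB] by metis
  have "norm y \<le> (MS' * MS * MR) * norm (R y)" for y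
  proof -
    have "y = S' (S (R (R y)))"
      using fun_cong[OF S(2), of "C' y"] fun_cong[OF S'(2), of y] fun_cong[OF R_sq, of y] by simp
    hence "norm y \<le> MS' * norm (S (R (R y)))" using MS'(2) by metis
    also have "\<dots> \<le> MS' * (MS * norm (R (R y)))" using MS(2) MS'(1) by (simp add: mult_left_mono)
    also have "\<dots> \<le> MS' * (MS * (MR * norm (R y)))"
      using MR(2) MS'(1) MS(1) by (simp add: mult_left_mono)
    finally show ?thesis by (simp add: mult.assoc)
  qed
  hence "1 / (MS' * MS * MR) * norm y \<le> norm (R y)" for y
    using MS MS' MR by (simp add: field_simps)
  moreover have "1 / (MS' * MS * MR) > 0" using MS MS' MR by simp
  ultimately show ?thesis using that by blast
qed

section \<open>Comparable nonnegative sums\<close>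

lemma summable_on_Sigma_nonneg_iff:
  fixes g :: "'a \<Rightarrow> 'b \<Rightarrow> real"
  assumes nonneg: "\<And>j k. 0 \<le> g j k" and inner: "\<And>j. g j summable_on B j"
  shows "(\<lambda>(j, k). g j k) summable_on Sigma A B \<longleftrightarrow> (\<lambda>j. infsum (g j) (B j)) summable_on A"
proof
  assume "(\<lambda>(j, k). g j k) summable_on Sigma A B"
  thus "(\<lambda>j. infsum (g j) (B j)) summable_on A" by (rule summable_on_Sigma_banach)
next
  assume "(\<lambda>j. infsum (g j) (B j)) summable_on A"
  thus "(\<lambda>(j, k). g j k) summable_on Sigma A B"
    by (intro summable_on_SigmaI[where g = "\<lambda>j. infsum (g j) (B j)"])
      (simp_all add: nonneg has_sum_infsum[OF inner])
qed

lemma comparable_nonneg_sums: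
  fixes c d :: "'a \<Rightarrow> real"
  assumes "\<And>j. 0 \<le> d j" and lower: "\<And>j. m * d j \<le> c j" and upper: "\<And>j. c j \<le> M * d j"
    and "m > 0"
  shows "d summable_on A \<longleftrightarrow> c summable_on A"
    and "c summable_on A \<Longrightarrow> m * infsum d A \<le> infsum c A \<and> infsum c A \<le> M * infsum d A"
proof -
  have "0 \<le> c j" for j using lower[of j] assms(1)[of j] \<open>m > 0\<close> by (meson mult_nonneg_nonneg less_imp_le order_trans)
  moreover have "d j \<le> (1/m) * c j" for j using lower[of j] \<open>m > 0\<close> by (simp add: field_simps mult.commute)
  ultimately show iff: "d summable_on A \<longleftrightarrow> c summable_on A"
    using summable_on_comparison_test[of "\<lambda>j. M * d j" A c] summable_on_cmult_right[of d A M]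
      summable_on_comparison_test[of "\<lambda>j. (1/m) * c j" A d] summable_on_cmult_right[of c A "1/m"]
      upper assms(1) by blast
  assume "c summable_on A"
  hence "d summable_on A" using iff by blast
  have "m * infsum d A = infsum (\<lambda>j. m * d j) A" by (simp add: infsum_cmult_right \<open>d summable_on A\<close>)
  also have "\<dots> \<le> infsum c A"
    using lower by (intro infsum_mono summable_on_cmult_right \<open>d summable_on A\<close> \<open>c summable_on A\<close>)
  finally have "m * infsum d A \<le> infsum c A" .
  moreover have "infsum c A \<le> infsum (\<lambda>j. M * d j) A"
    using upper by (intro infsum_mono summable_on_cmult_right \<open>d summable_on A\<close> \<open>c summable_on A\<close>)
  ultimately show "m * infsum d A \<le> infsum c A \<and> infsum c A \<le> M * infsum d A"
    by (simp add: infsum_cmult_right \<open>d summable_on A\<close>)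
qed

lemma woven_sums_comparable:
  fixes a b :: "nat \<Rightarrow> real" and gL gO :: "nat \<Rightarrow> nat \<Rightarrow> real" and \<sigma> :: "nat set"
  assumes nonneg: "\<And>j k. 0 \<le> gL j k" "\<And>j k. 0 \<le> gO j k" "\<And>j. 0 \<le> a j" "\<And>j. 0 \<le> b j"
    and summable: "\<And>j. gL j summable_on I j" "\<And>j. gO j summable_on Q j"
    and frameL: "\<And>j. \<alpha> * a j \<le> infsum (gL j) (I j) \<and> infsum (gL j) (I j) \<le> \<beta> * a j"
    and frameO: "\<And>j. \<alpha>' * b j \<le> infsum (gO j) (Q j) \<and> infsum (gO j) (Q j) \<le> \<beta>' * b j"
    and "0 < \<alpha>" "0 < \<alpha>'"
  defines "d \<equiv> \<lambda>j. if j \<in> \<sigma> then a j else b j"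
    and "S \<equiv> (\<Sum>\<^sub>\<infinity>(j,k)\<in>{(j,k). j \<in> \<sigma> \<and> k \<in> I j}. gL j k) +
              (\<Sum>\<^sub>\<infinity>(j,k)\<in>{(j,k). j \<notin> \<sigma> \<and> k \<in> Q j}. gO j k)"
  shows "d summable_on UNIV \<longleftrightarrow>
           (\<lambda>(j,k). gL j k) summable_on {(j,k). j \<in> \<sigma> \<and> k \<in> I j} \<and>
           (\<lambda>(j,k). gO j k) summable_on {(j,k). j \<notin> \<sigma> \<and> k \<in> Q j}"
    and "d summable_on UNIV \<Longrightarrow> min \<alpha> \<alpha>' * infsum d UNIV \<le> S \<and> S \<le> max \<beta> \<beta>' * infsum d UNIV"
proof -
  define c where "c j = (if j \<in> \<sigma> then infsum (gL j) (I j) else infsum (gO j) (Q j))" for j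
  have "min \<alpha> \<alpha>' * d j \<le> c j \<and> c j \<le> max \<beta> \<beta>' * d j" for j
    using frameL[of j] frameO[of j] nonneg(3,4)[of j]
      mult_right_mono[of "min \<alpha> \<alpha>'" \<alpha> "a j"] mult_right_mono[of "min \<alpha> \<alpha>'" \<alpha>' "b j"]
      mult_right_mono[of \<beta> "max \<beta> \<beta>'" "a j"] mult_right_mono[of \<beta>' "max \<beta> \<beta>'" "b j"]
    unfolding c_def d_def by auto
  moreover have "0 \<le> d j" for j using nonneg(3,4) unfolding d_def by simp
  ultimately have cmp: "d summable_on UNIV \<longleftrightarrow> c summable_on UNIV"
    "c summable_on UNIV \<Longrightarrow> min \<alpha> \<alpha>' * infsum d UNIV \<le> infsum c UNIV \<and> infsum c UNIV \<le> max \<beta> \<beta>' * infsum d UNIV"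
    using comparable_nonneg_sums[of d "min \<alpha> \<alpha>'" c "max \<beta> \<beta>'" UNIV] \<open>0 < \<alpha>\<close> \<open>0 < \<alpha>'\<close> by auto
  have SigmaL: "{(j,k). j \<in> \<sigma> \<and> k \<in> I j} = Sigma \<sigma> I"
    and SigmaO: "{(j,k). j \<notin> \<sigma> \<and> k \<in> Q j} = Sigma (- \<sigma>) Q" by auto
  have cL: "c summable_on \<sigma> \<longleftrightarrow> (\<lambda>j. infsum (gL j) (I j)) summable_on \<sigma>"
    "infsum c \<sigma> = infsum (\<lambda>j. infsum (gL j) (I j)) \<sigma>"
    by (rule summable_on_cong, simp add: c_def) (rule infsum_cong, simp add: c_def)
  have cO: "c summable_on (- \<sigma>) \<longleftrightarrow> (\<lambda>j. infsum (gO j) (Q j)) summable_on (- \<sigma>)"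
    "infsum c (- \<sigma>) = infsum (\<lambda>j. infsum (gO j) (Q j)) (- \<sigma>)"
    by (rule summable_on_cong, simp add: c_def) (rule infsum_cong, simp add: c_def)
  have split: "c summable_on UNIV \<longleftrightarrow> c summable_on \<sigma> \<and> c summable_on (- \<sigma>)"
  proof
    assume "c summable_on \<sigma> \<and> c summable_on (- \<sigma>)"
    hence "c summable_on (\<sigma> \<union> - \<sigma>)" by (intro summable_on_Un_disjoint) auto
    thus "c summable_on UNIV" by simp
  qed (use summable_on_subset_banach in blast)
  show iff: "d summable_on UNIV \<longleftrightarrow>
           (\<lambda>(j,k). gL j k) summable_on {(j,k). j \<in> \<sigma> \<and> k \<in> I j} \<and>
           (\<lambda>(j,k). gO j k) summable_on {(j,k). j \<notin> \<sigma> \<and> k \<in> Q j}"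
    unfolding cmp(1) split cL(1) cO(1) SigmaL SigmaO
      summable_on_Sigma_nonneg_iff[OF nonneg(1) summable(1)] summable_on_Sigma_nonneg_iff[OF nonneg(2) summable(2)] ..
  assume "d summable_on UNIV"
  hence "c summable_on UNIV" and pairs: "(\<lambda>(j,k). gL j k) summable_on Sigma \<sigma> I"
    "(\<lambda>(j,k). gO j k) summable_on Sigma (- \<sigma>) Q"
    using cmp(1) iff unfolding SigmaL SigmaO by auto
  hence "infsum c (\<sigma> \<union> - \<sigma>) = infsum c \<sigma> + infsum c (- \<sigma>)"
    using split by (intro infsum_Un_disjoint) auto
  hence "infsum c UNIV = infsum c \<sigma> + infsum c (- \<sigma>)" by simp
  also have "\<dots> = S"
    unfolding S_def cL(2) cO(2) SigmaL SigmaO infsum_Sigma'_banach[OF pairs(1)] infsum_Sigma'_banach[OF pairs(2)] ..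
  finally show "min \<alpha> \<alpha>' * infsum d UNIV \<le> S \<and> S \<le> max \<beta> \<beta>' * infsum d UNIV"
    using cmp(2)[OF \<open>c summable_on UNIV\<close>] by simp
qed

lemma ctrl_Kg_ineq_of_real_iff:
  fixes K :: "'h::chilbert_space \<Rightarrow> 'h" and t :: "'h \<Rightarrow> nat \<Rightarrow> real"
  shows "ctrl_Kg_ineq K A B (\<lambda>f j. complex_of_real (t f j)) \<longleftrightarrow>
     (\<forall>f. t f summable_on UNIV \<and> A * (norm (adj K f))\<^sup>2 \<le> infsum (t f) UNIV \<and>
          infsum (t f) UNIV \<le> B * (norm f)\<^sup>2)"
proof -
  have summable: "(\<lambda>j. complex_of_real (t f j)) summable_on UNIV \<longleftrightarrow> t f summable_on UNIV" for f
    using summable_on_Re[of "\<lambda>j. complex_of_real (t f j)" UNIV] summable_on_of_real[of "t f" UNIV]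
    by auto
  have "Re (\<Sum>\<^sub>\<infinity>j. complex_of_real (t f j)) = infsum (t f) UNIV" for f
  proof (cases "t f summable_on UNIV")
    case True
    thus ?thesis using infsum_Re[OF summable_on_of_real[OF True]] by simp
  next
    case False
    thus ?thesis using summable[of f] by (simp add: infsum_not_exists)
  qed
  with summable show ?thesis unfolding ctrl_Kg_ineq_def by simp
qed

lemma ctrl_woven_iff_woven_K_frames:
  fixes K :: "'h::chilbert_space \<Rightarrow> 'h" and a b :: "'h \<Rightarrow> nat \<Rightarrow> real"
    and u w :: "nat \<Rightarrow> nat \<Rightarrow> 'h"
  assumes nonneg: "\<And>f j. 0 \<le> a f j" "\<And>f j. 0 \<le> b f j"
    and frame_u: "\<And>f j. (\<lambda>k. (cmod (cinner f (u j k)))\<^sup>2) summable_on I j \<and>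
        \<alpha> * a f j \<le> (\<Sum>\<^sub>\<infinity>k\<in>I j. (cmod (cinner f (u j k)))\<^sup>2) \<and>
        (\<Sum>\<^sub>\<infinity>k\<in>I j. (cmod (cinner f (u j k)))\<^sup>2) \<le> \<beta> * a f j"
    and frame_w: "\<And>f j. (\<lambda>k. (cmod (cinner f (w j k)))\<^sup>2) summable_on Q j \<and>
        \<alpha>' * b f j \<le> (\<Sum>\<^sub>\<infinity>k\<in>Q j. (cmod (cinner f (w j k)))\<^sup>2) \<and>
        (\<Sum>\<^sub>\<infinity>k\<in>Q j. (cmod (cinner f (w j k)))\<^sup>2) \<le> \<beta>' * b f j"
    and pos: "0 < \<alpha>" "0 < \<alpha>'" "0 < \<beta>" "0 < \<beta>'"
  shows "(\<exists>A B. 0 < A \<and> A \<le> B \<and> (\<forall>\<sigma>. ctrl_Kg_ineq K A B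
            (\<lambda>f j. complex_of_real (if j \<in> \<sigma> then a f j else b f j))))
         \<longleftrightarrow> woven_K_frames K u I w Q"
proof -
  define d where "d \<sigma> f j = (if j \<in> \<sigma> then a f j else b f j)" for \<sigma> f j
  define S where "S \<sigma> f = (\<Sum>\<^sub>\<infinity>(j,k)\<in>{(j,k). j \<in> \<sigma> \<and> k \<in> I j}. (cmod (cinner f (u j k)))\<^sup>2) +
      (\<Sum>\<^sub>\<infinity>(j,k)\<in>{(j,k). j \<notin> \<sigma> \<and> k \<in> Q j}. (cmod (cinner f (w j k)))\<^sup>2)" for \<sigma> f
  have summable_iff: "d \<sigma> f summable_on UNIV \<longleftrightarrow>
      (\<lambda>(j,k). (cmod (cinner f (u j k)))\<^sup>2) summable_on {(j,k). j \<in> \<sigma> \<and> k \<in> I j} \<and>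
      (\<lambda>(j,k). (cmod (cinner f (w j k)))\<^sup>2) summable_on {(j,k). j \<notin> \<sigma> \<and> k \<in> Q j}" for \<sigma> f
    unfolding d_def by (rule woven_sums_comparable(1)[where \<alpha> = \<alpha> and \<beta> = \<beta> and \<alpha>' = \<alpha>' and \<beta>' = \<beta>'])
      (use nonneg frame_u frame_w pos in auto)
  have bounds: "min \<alpha> \<alpha>' * infsum (d \<sigma> f) UNIV \<le> S \<sigma> f \<and> S \<sigma> f \<le> max \<beta> \<beta>' * infsum (d \<sigma> f) UNIV"
    if "d \<sigma> f summable_on UNIV" for \<sigma> f
    unfolding d_def S_def
    by (rule woven_sums_comparable(2)[where \<alpha> = \<alpha> and \<beta> = \<beta> and \<alpha>' = \<alpha>' and \<beta>' = \<beta>'])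
      (use that[unfolded d_def] nonneg frame_u frame_w pos in auto)
  have ineq_iff: "ctrl_Kg_ineq K A B (\<lambda>f j. complex_of_real (if j \<in> \<sigma> then a f j else b f j)) \<longleftrightarrow>
      (\<forall>f. d \<sigma> f summable_on UNIV \<and> A * (norm (adj K f))\<^sup>2 \<le> infsum (d \<sigma> f) UNIV \<and>
           infsum (d \<sigma> f) UNIV \<le> B * (norm f)\<^sup>2)" for A B \<sigma>
    using ctrl_Kg_ineq_of_real_iff[of K A B "d \<sigma>"] unfolding d_def by simp
  have woven_iff: "woven_K_frames K u I w Q \<longleftrightarrow> (\<exists>D1 D2. 0 < D1 \<and> D1 \<le> D2 \<and> (\<forall>\<sigma> f.
      d \<sigma> f summable_on UNIV \<and> D1 * (norm (adj K f))\<^sup>2 \<le> S \<sigma> f \<and> S \<sigma> f \<le> D2 * (norm f)\<^sup>2))"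
    unfolding woven_K_frames_def summable_iff S_def by simp
  have "min \<alpha> \<alpha>' > 0" "max \<beta> \<beta>' > 0" using pos by auto
  show ?thesis
    unfolding woven_iff ineq_iff
  proof (intro iffI; elim exE conjE)
    fix A B assume "0 < A" "A \<le> B"
      and ineq: "\<forall>\<sigma> f. d \<sigma> f summable_on UNIV \<and> A * (norm (adj K f))\<^sup>2 \<le> infsum (d \<sigma> f) UNIV \<and>
           infsum (d \<sigma> f) UNIV \<le> B * (norm f)\<^sup>2"
    show "\<exists>D1 D2. 0 < D1 \<and> D1 \<le> D2 \<and> (\<forall>\<sigma> f. d \<sigma> f summable_on UNIV \<and>
        D1 * (norm (adj K f))\<^sup>2 \<le> S \<sigma> f \<and> S \<sigma> f \<le> D2 * (norm f)\<^sup>2)"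
    proof (rule exI[of _ "min \<alpha> \<alpha>' * A"], rule exI[of _ "max (max \<beta> \<beta>' * B) (min \<alpha> \<alpha>' * A)"],
        intro conjI allI)
      fix \<sigma> f
      from ineq have d: "d \<sigma> f summable_on UNIV" "A * (norm (adj K f))\<^sup>2 \<le> infsum (d \<sigma> f) UNIV"
        "infsum (d \<sigma> f) UNIV \<le> B * (norm f)\<^sup>2" by auto
      show "d \<sigma> f summable_on UNIV" by (fact d(1))
      have "min \<alpha> \<alpha>' * A * (norm (adj K f))\<^sup>2 \<le> min \<alpha> \<alpha>' * infsum (d \<sigma> f) UNIV"
        using d(2) \<open>min \<alpha> \<alpha>' > 0\<close> by (simp add: mult.assoc)
      thus "min \<alpha> \<alpha>' * A * (norm (adj K f))\<^sup>2 \<le> S \<sigma> f" using bounds[OF d(1)] by linarith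
      have "max \<beta> \<beta>' * infsum (d \<sigma> f) UNIV \<le> max \<beta> \<beta>' * B * (norm f)\<^sup>2"
        using d(3) \<open>max \<beta> \<beta>' > 0\<close> by (simp add: mult.assoc)
      also have "\<dots> \<le> max (max \<beta> \<beta>' * B) (min \<alpha> \<alpha>' * A) * (norm f)\<^sup>2"
        by (simp add: mult_right_mono)
      finally show "S \<sigma> f \<le> max (max \<beta> \<beta>' * B) (min \<alpha> \<alpha>' * A) * (norm f)\<^sup>2"
        using bounds[OF d(1)] by linarith
    qed (use \<open>0 < A\<close> \<open>min \<alpha> \<alpha>' > 0\<close> in auto)
  next
    fix D1 D2 assume "0 < D1" "D1 \<le> D2"
      and woven: "\<forall>\<sigma> f. d \<sigma> f summable_on UNIV \<and> D1 * (norm (adj K f))\<^sup>2 \<le> S \<sigma> f \<and>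
          S \<sigma> f \<le> D2 * (norm f)\<^sup>2"
    show "\<exists>A B. 0 < A \<and> A \<le> B \<and> (\<forall>\<sigma> f. d \<sigma> f summable_on UNIV \<and>
        A * (norm (adj K f))\<^sup>2 \<le> infsum (d \<sigma> f) UNIV \<and> infsum (d \<sigma> f) UNIV \<le> B * (norm f)\<^sup>2)"
    proof (rule exI[of _ "D1 / max \<beta> \<beta>'"], rule exI[of _ "max (D2 / min \<alpha> \<alpha>') (D1 / max \<beta> \<beta>')"],
        intro conjI allI)
      fix \<sigma> f
      from woven have W: "d \<sigma> f summable_on UNIV" "D1 * (norm (adj K f))\<^sup>2 \<le> S \<sigma> f"
        "S \<sigma> f \<le> D2 * (norm f)\<^sup>2" by auto
      show "d \<sigma> f summable_on UNIV" by (fact W(1))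
      have "D1 * (norm (adj K f))\<^sup>2 \<le> max \<beta> \<beta>' * infsum (d \<sigma> f) UNIV"
        using W(2) bounds[OF W(1)] by linarith
      thus "D1 / max \<beta> \<beta>' * (norm (adj K f))\<^sup>2 \<le> infsum (d \<sigma> f) UNIV"
        using \<open>max \<beta> \<beta>' > 0\<close> by (simp add: field_simps)
      have "min \<alpha> \<alpha>' * infsum (d \<sigma> f) UNIV \<le> D2 * (norm f)\<^sup>2"
        using W(3) bounds[OF W(1)] by linarith
      hence "infsum (d \<sigma> f) UNIV \<le> D2 / min \<alpha> \<alpha>' * (norm f)\<^sup>2"
        using \<open>min \<alpha> \<alpha>' > 0\<close> by (simp add: field_simps)
      also have "\<dots> \<le> max (D2 / min \<alpha> \<alpha>') (D1 / max \<beta> \<beta>') * (norm f)\<^sup>2"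
        by (intro mult_right_mono) simp_all
      finally show "infsum (d \<sigma> f) UNIV \<le> max (D2 / min \<alpha> \<alpha>') (D1 / max \<beta> \<beta>') * (norm f)\<^sup>2" .
    qed (use \<open>0 < D1\<close> \<open>max \<beta> \<beta>' > 0\<close> in auto)
  qed
qed

theorem mainTheorem4:
  fixes K C C' R :: "'h::chilbert_space \<Rightarrow> 'h"
    and \<Lambda> :: "nat \<Rightarrow> 'h \<Rightarrow> 'k1::chilbert_space" and HH :: "nat \<Rightarrow> 'k1 set"
    and \<Omega> :: "nat \<Rightarrow> 'h \<Rightarrow> 'k2::chilbert_space" and WW :: "nat \<Rightarrow> 'k2 set"
    and fr :: "nat \<Rightarrow> nat \<Rightarrow> 'k1" and I :: "nat \<Rightarrow> nat set"
    and gr :: "nat \<Rightarrow> nat \<Rightarrow> 'k2" and Q :: "nat \<Rightarrow> nat set"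
    and \<alpha> \<beta> \<alpha>' \<beta>' :: real
  assumes sep: "separable_space TYPE('h)"
    and K: "bounded_clinear K"
    and C: "GL_plus C" and C': "GL_plus C'"
    and HH: "\<And>j. closed_csubspace (HH j)" and WW: "\<And>j. closed_csubspace (WW j)"
    and \<Lambda>: "\<And>j. bounded_clinear (\<Lambda> j) \<and> range (\<Lambda> j) \<subseteq> HH j"
    and \<Omega>: "\<And>j. bounded_clinear (\<Omega> j) \<and> range (\<Omega> j) \<subseteq> WW j"
    and comm: "C \<circ> C' = C' \<circ> C"
    and commL: "\<And>j. C \<circ> (adj (\<Lambda> j) \<circ> \<Lambda> j) = (adj (\<Lambda> j) \<circ> \<Lambda> j) \<circ> C \<and>
                     C' \<circ> (adj (\<Lambda> j) \<circ> \<Lambda> j) = (adj (\<Lambda> j) \<circ> \<Lambda> j) \<circ> C'"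
    and commO: "\<And>j. C \<circ> (adj (\<Omega> j) \<circ> \<Omega> j) = (adj (\<Omega> j) \<circ> \<Omega> j) \<circ> C \<and>
                     C' \<circ> (adj (\<Omega> j) \<circ> \<Omega> j) = (adj (\<Omega> j) \<circ> \<Omega> j) \<circ> C'"
    and R: "positive_op R" and R_sq: "R \<circ> R = C \<circ> C'"
    and frameL: "ctrl_Kg_frame K C C' \<Lambda>" and frameO: "ctrl_Kg_frame K C C' \<Omega>"
    and fr: "\<And>j. frame_for (HH j) (fr j) (I j) \<alpha> \<beta>"
    and gr: "\<And>j. frame_for (WW j) (gr j) (Q j) \<alpha>' \<beta>'"
  shows "ctrl_Kg_woven K C C' \<Lambda> \<Omega> \<longleftrightarrow>
         woven_K_frames K (\<lambda>j k. R (adj (\<Lambda> j) (fr j k))) I (\<lambda>j k. R (adj (\<Omega> j) (gr j k))) Q"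
proof -
  obtain a where a: "a > 0" "\<And>y. a * norm y \<le> norm (R y)"
    using GL_plus_square_root_bounded_below[OF C C' R R_sq] by blast
  have "positive_op C'" using C' unfolding GL_plus_def by simp
  note term_eq = controlled_term_eq_power2_norm[OF R a this comm R_sq]
  have terms: "cinner (\<Lambda> j (C f)) (\<Lambda> j (C' f)) = of_real ((norm (\<Lambda> j (R f)))\<^sup>2)"
    "cinner (\<Omega> j (C f)) (\<Omega> j (C' f)) = of_real ((norm (\<Omega> j (R f)))\<^sup>2)" for j f
    using \<Lambda>[of j] \<Omega>[of j] commL[of j] commO[of j] by (simp_all add: term_eq)
  have "ctrl_Kg_woven K C C' \<Lambda> \<Omega> \<longleftrightarrow> (\<exists>A B. 0 < A \<and> A \<le> B \<and> (\<forall>\<sigma>. ctrl_Kg_ineq K A B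
      (\<lambda>f j. complex_of_real (if j \<in> \<sigma> then (norm (\<Lambda> j (R f)))\<^sup>2 else (norm (\<Omega> j (R f)))\<^sup>2))))"
    unfolding ctrl_Kg_woven_def terms by (simp only: if_distrib)
  also have "\<dots> \<longleftrightarrow> woven_K_frames K (\<lambda>j k. R (adj (\<Lambda> j) (fr j k))) I (\<lambda>j k. R (adj (\<Omega> j) (gr j k))) Q"
    using fr[of 0] gr[of 0] \<Lambda> \<Omega>
    by (intro ctrl_woven_iff_woven_K_frames[where \<alpha> = \<alpha> and \<beta> = \<beta> and \<alpha>' = \<alpha>' and \<beta>' = \<beta>'])
      (simp_all add: frame_for_def frame_bounds_pullback[OF fr R] frame_bounds_pullback[OF gr R])
  finally show ?thesis .
qed

end
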